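(* Let $\mathcal{C}=(\mathcal{L},\mathcal{P})$ be a combinatorial line arrangement with ordered lines $\mathcal{L}=\{\ell_0,\ldots,\ell_n\}$, and let $\Gamma(\mathcal{C})$ be its incidence graph. Then there is a one-to-one correspondence between the elements of $\mathbf{nbc}(\mathcal{C})$ and a set of independent cycles of $\Gamma(\mathcal{C})$ forming a basis of its cycle space; in particular the first Betti number $b_1(\Gamma(\mathcal{C}))$ equals $|\mathbf{nbc}(\mathcal{C})|$.
   Context: A combinatorial line arrangement is a pair $\mathcal{C}=(\mathcal{L},\mathcal{P})$ with $\mathcal{L}$ a finite set ("lines") and $\mathcal{P}\subset 2^{\mathcal{L}}$ ("intersection points") such that every $P\in\mathcal{P}$ has $|P|\ge2$ and any two distinct lines lie in a unique common $P\in\mathcal{P}$. Lines are ordered $\ell_0,\ldots,\ell_n$ and points are identified with index sets $I\subset\{0,\ldots,n\}$. The incidence graph $\Gamma(\mathcal{C})$ is the bipartite graph with vertex set $\mathcal{L}\cup\mathcal{P}$ and edges $(\ell,P)$ for $\ell\in P$. A pair $(j,k)$ with $1\le j<k\le n$ is an nbc if there is a point $P_I$ with $j,k\in I$ and $j=\min I$; $\mathbf{nbc}(\mathcal{C})$ is the set of these pairs. *)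

theory Defs
  imports Main
begin

text \<open>Lines are the indices 0..n (line l_i is identified with i); points are index sets.\<close>

definition comb_line_arr :: "nat \<Rightarrow> nat set set \<Rightarrow> bool" where
  "comb_line_arr n Pts \<longleftrightarrow>
     (\<forall>P\<in>Pts. P \<subseteq> {0..n} \<and> card P \<ge> 2) \<and>
     (\<forall>i\<le>n. \<forall>j\<le>n. i \<noteq> j \<longrightarrow> (\<exists>!P. P \<in> Pts \<and> i \<in> P \<and> j \<in> P))"

definition nbc :: "nat \<Rightarrow> nat set set \<Rightarrow> (nat \<times> nat) set" where
  "nbc n Pts = {(j, k). 1 \<le> j \<and> j < k \<and> k \<le> n \<and>
      (\<exists>P\<in>Pts. j \<in> P \<and> k \<in> P \<and> j = Min P)}"

type_synonym vert = "nat + nat set"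

definition inc_vertices :: "nat \<Rightarrow> nat set set \<Rightarrow> vert set" where
  "inc_vertices n Pts = Inl ` {0..n} \<union> Inr ` Pts"

definition inc_edges :: "nat \<Rightarrow> nat set set \<Rightarrow> vert set set" where
  "inc_edges n Pts = {{Inl i, Inr P} | i P. i \<le> n \<and> P \<in> Pts \<and> i \<in> P}"

definition edeg :: "'v set set \<Rightarrow> 'v \<Rightarrow> nat" where
  "edeg F v = card {e \<in> F. v \<in> e}"

definition cycle_space :: "'v set \<Rightarrow> 'v set set \<Rightarrow> 'v set set set" where
  "cycle_space V E = {F. F \<subseteq> E \<and> (\<forall>v\<in>V. even (edeg F v))}"

definition is_cycle :: "'v set \<Rightarrow> 'v set set \<Rightarrow> 'v set set \<Rightarrow> bool" where
  "is_cycle V E C \<longleftrightarrow> (\<exists>vs. length vs \<ge> 3 \<and> distinct vs \<and> set vs \<subseteq> V \<and>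
      C = {{vs ! i, vs ! ((i + 1) mod length vs)} | i. i < length vs} \<and> C \<subseteq> E)"

text \<open>GF(2)-sum (iterated symmetric difference) of a finite family of edge sets.\<close>
definition gf2_sum :: "'v set set set \<Rightarrow> 'v set set" where
  "gf2_sum S = {e. odd (card {C \<in> S. e \<in> C})}"

definition gf2_independent :: "'v set set set \<Rightarrow> bool" where
  "gf2_independent B \<longleftrightarrow> (\<forall>S. S \<subseteq> B \<and> finite S \<and> S \<noteq> {} \<longrightarrow> gf2_sum S \<noteq> {})"

definition gf2_spans :: "'v set set set \<Rightarrow> 'v set set set \<Rightarrow> bool" where
  "gf2_spans B W \<longleftrightarrow> (\<forall>F\<in>W. \<exists>S. S \<subseteq> B \<and> finite S \<and> F = gf2_sum S)"

definition is_cycle_basis :: "'v set \<Rightarrow> 'v set set \<Rightarrow> 'v set set set \<Rightarrow> bool" where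
  "is_cycle_basis V E B \<longleftrightarrow> (\<forall>C\<in>B. is_cycle V E C) \<and> gf2_independent B \<and>
      gf2_spans B (cycle_space V E)"

definition graph_adj :: "'v set set \<Rightarrow> ('v \<times> 'v) set" where
  "graph_adj E = {(u, v). {u, v} \<in> E}"

definition num_components :: "'v set \<Rightarrow> 'v set set \<Rightarrow> nat" where
  "num_components V E = card (V // ((graph_adj E)\<^sup>*))"

definition betti1 :: "'v set \<Rightarrow> 'v set set \<Rightarrow> int" where
  "betti1 V E = int (card E) - int (card V) + int (num_components V E)"

end

theory Submission
  imports Defs
begin

(* Fix line 0. For an nbc pair (j, k), let P be the point through lines j and k, so that
   j = min P > 0; the nbc cycle of (j, k) is the hexagon
   line 0 - P_0j - line j - P - line k - P_0k - line 0 of the incidence graph.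
   Its edge {line k, P} lies on no other nbc cycle, so the nbc cycles are independent.
   The remaining edges, namely all edges at points through line 0 together with the edges
   {line (min P), P} for the other points, form a spanning tree; hence an even subgraph
   avoiding all private edges is empty, and subtracting from any even subgraph the nbc
   cycles whose private edge it contains shows that these cycles span the cycle space.
   For the Betti number: the graph is connected, |E| is the sum of |P|, |V| = n + 1 + |Pts|,
   and the sets P - {0} for the points through line 0 partition the lines 1..n, which
   leaves b1 = sum of (|P| - 1) over the points missing line 0 = |nbc|. *)

lemma gf2_sum_subset_Union: "gf2_sum S \<subseteq> \<Union>S"
  unfolding gf2_sum_def by (auto dest: odd_card_imp_not_empty)

lemma even_edeg_gf2_sum:
  assumes "finite S" and "\<And>C. C \<in> S \<Longrightarrow> finite C" and "\<And>C. C \<in> S \<Longrightarrow> even (edeg C v)"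
  shows "even (edeg (gf2_sum S) v)"
proof -
  define U where "U = {e \<in> \<Union>S. v \<in> e}"
  have "finite U" using assms(1,2) unfolding U_def by auto
  have "(\<Sum>C\<in>S. edeg C v) = (\<Sum>C\<in>S. card {e \<in> U. e \<in> C})"
    unfolding edeg_def U_def by (intro sum.cong refl arg_cong[where f = card]) auto
  also have "\<dots> = (\<Sum>e\<in>U. card {C \<in> S. e \<in> C})"
    by (rule sum_multicount_gen) (use assms(1) \<open>finite U\<close> in auto)
  finally have "even (\<Sum>e\<in>U. card {C \<in> S. e \<in> C})"
    using assms(3) by (metis dvd_sum)
  then have "even (card {e \<in> U. odd (card {C \<in> S. e \<in> C})})"
    by (simp add: even_sum_iff[OF \<open>finite U\<close>])
  moreover have "{e \<in> U. odd (card {C \<in> S. e \<in> C})} = {e \<in> gf2_sum S. v \<in> e}"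
    using gf2_sum_subset_Union unfolding U_def gf2_sum_def by blast
  ultimately show ?thesis unfolding edeg_def by simp
qed

lemma even_edeg_sym_diff_iff:
  assumes "finite F" "finite G"
  shows "even (edeg ((F - G) \<union> (G - F)) v) \<longleftrightarrow> even (edeg F v + edeg G v)"
proof -
  define A where "A = {e \<in> F. v \<in> e}"
  define B where "B = {e \<in> G. v \<in> e}"
  have fin: "finite A" "finite B" using assms unfolding A_def B_def by auto
  have "{e \<in> (F - G) \<union> (G - F). v \<in> e} = (A - B) \<union> (B - A)" unfolding A_def B_def by auto
  moreover have "card ((A - B) \<union> (B - A)) = card (A - B) + card (B - A)"
    by (rule card_Un_disjoint) (use fin in auto)
  moreover have "card (A - B) + card (A \<inter> B) = card A" "card (B - A) + card (A \<inter> B) = card B"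
    using fin card_Int_Diff[of A B] card_Int_Diff[of B A] by (simp_all add: Int_commute)
  ultimately show ?thesis unfolding edeg_def A_def[symmetric] B_def[symmetric] by presburger
qed

lemma no_pendant_edge:
  assumes "even (edeg F v)" and "\<And>e. e \<in> F \<Longrightarrow> v \<in> e \<Longrightarrow> e = e0"
  shows "v \<notin> \<Union>F"
proof -
  have sub: "{e \<in> F. v \<in> e} \<subseteq> {e0}" using assms(2) by blast
  then have "card {e \<in> F. v \<in> e} \<le> 1" using card_mono[OF _ sub] by simp
  then have "card {e \<in> F. v \<in> e} = 0" using assms(1) unfolding edeg_def by presburger
  then show ?thesis using finite_subset[OF sub] by auto
qed

definition private_edges :: "'i set \<Rightarrow> ('i \<Rightarrow> 'v set set) \<Rightarrow> ('i \<Rightarrow> 'v set) \<Rightarrow> bool" where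
  "private_edges I C key \<longleftrightarrow> (\<forall>i\<in>I. key i \<in> C i \<and> (\<forall>j\<in>I. key i \<in> C j \<longrightarrow> j = i))"

lemma private_edges_inj_on:
  assumes "private_edges I C key"
  shows "inj_on C I"
proof (rule inj_onI)
  fix i j assume "i \<in> I" "j \<in> I" "C i = C j"
  then show "i = j" using assms unfolding private_edges_def by (metis (no_types))
qed

lemma private_edge_in_gf2_sum_iff:
  assumes "private_edges I C key" "J \<subseteq> I" "i \<in> I"
  shows "key i \<in> gf2_sum (C ` J) \<longleftrightarrow> i \<in> J"
proof -
  have "{D \<in> C ` J. key i \<in> D} = C ` {j \<in> J. key i \<in> C j}" by blast
  also have "{j \<in> J. key i \<in> C j} = {i} \<inter> J"
    using assms unfolding private_edges_def by blast
  finally have "{D \<in> C ` J. key i \<in> D} = (if i \<in> J then {C i} else {})" by auto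
  then show ?thesis unfolding gf2_sum_def by simp
qed

lemma gf2_independent_if_private_edges:
  assumes "private_edges I C key"
  shows "gf2_independent (C ` I)"
  unfolding gf2_independent_def
proof (intro allI impI)
  fix S assume S: "S \<subseteq> C ` I \<and> finite S \<and> S \<noteq> {}"
  then obtain J where J: "J \<subseteq> I" "S = C ` J" unfolding subset_image_iff by blast
  with S obtain i where "i \<in> J" by blast
  then have "key i \<in> gf2_sum S" using private_edge_in_gf2_sum_iff[OF assms] J by blast
  then show "gf2_sum S \<noteq> {}" by blast
qed

lemma gf2_sum_in_cycle_space:
  assumes "finite E" "finite S" "S \<subseteq> cycle_space V E"
  shows "gf2_sum S \<in> cycle_space V E"
proof -
  have sub: "C \<subseteq> E" if "C \<in> S" for C using that assms(3) unfolding cycle_space_def by blast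
  have "gf2_sum S \<subseteq> E" using gf2_sum_subset_Union[of S] sub by blast
  moreover have "even (edeg (gf2_sum S) v)" if "v \<in> V" for v
  proof (rule even_edeg_gf2_sum)
    show "finite S" by fact
    show "finite C" if "C \<in> S" for C using sub[OF that] assms(1) by (rule finite_subset)
    show "even (edeg C v)" if "C \<in> S" for C
      using that \<open>v \<in> V\<close> assms(3) unfolding cycle_space_def by blast
  qed
  ultimately show ?thesis unfolding cycle_space_def by blast
qed

lemma sym_diff_in_cycle_space:
  assumes "finite E" "F \<in> cycle_space V E" "G \<in> cycle_space V E"
  shows "(F - G) \<union> (G - F) \<in> cycle_space V E"
proof -
  have "F \<subseteq> E" "G \<subseteq> E" using assms(2,3) unfolding cycle_space_def by auto
  then have "finite F" "finite G" using assms(1) by (auto intro: finite_subset)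
  then show ?thesis
    using assms(2,3) even_edeg_sym_diff_iff[OF \<open>finite F\<close> \<open>finite G\<close>] \<open>F \<subseteq> E\<close> \<open>G \<subseteq> E\<close>
    unfolding cycle_space_def by auto
qed

lemma gf2_spans_cycle_space_if_private_edges:
  assumes priv: "private_edges I C key" and "finite I" "finite E"
    and cyc: "\<And>i. i \<in> I \<Longrightarrow> C i \<in> cycle_space V E"
    and empty: "\<And>F. F \<in> cycle_space V E \<Longrightarrow> \<forall>i\<in>I. key i \<notin> F \<Longrightarrow> F = {}"
  shows "gf2_spans (C ` I) (cycle_space V E)"
  unfolding gf2_spans_def
proof
  fix F assume F: "F \<in> cycle_space V E"
  define J where "J = {i \<in> I. key i \<in> F}"
  define G where "G = gf2_sum (C ` J)"
  have "J \<subseteq> I" unfolding J_def by blast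
  then have "finite J" using \<open>finite I\<close> by (rule finite_subset)
  have "G \<in> cycle_space V E"
    unfolding G_def using \<open>finite E\<close> \<open>finite J\<close> cyc \<open>J \<subseteq> I\<close>
    by (intro gf2_sum_in_cycle_space) auto
  with \<open>finite E\<close> F have "(F - G) \<union> (G - F) \<in> cycle_space V E"
    by (rule sym_diff_in_cycle_space)
  moreover have "key i \<notin> (F - G) \<union> (G - F)" if "i \<in> I" for i
  proof -
    have "key i \<in> G \<longleftrightarrow> key i \<in> F"
      unfolding G_def private_edge_in_gf2_sum_iff[OF priv \<open>J \<subseteq> I\<close> that]
      using that unfolding J_def by blast
    then show ?thesis by blast
  qed
  ultimately have "(F - G) \<union> (G - F) = {}" using empty by blast
  then have "F = gf2_sum (C ` J)" unfolding G_def by blast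
  then show "\<exists>S. S \<subseteq> C ` I \<and> finite S \<and> F = gf2_sum S"
    using \<open>J \<subseteq> I\<close> \<open>finite J\<close> by (intro exI[of _ "C ` J"]) auto
qed

definition closed_walk_edges :: "'v list \<Rightarrow> 'v set set" where
  "closed_walk_edges vs = {{vs ! i, vs ! ((i + 1) mod length vs)} | i. i < length vs}"

lemma inj_on_closed_walk_edge:
  assumes "distinct vs" "3 \<le> length vs"
  shows "inj_on (\<lambda>i. {vs ! i, vs ! (Suc i mod length vs)}) {..<length vs}"
proof (rule inj_onI)
  define m where "m = length vs"
  have succ: "Suc k mod m = (if Suc k = m then 0 else Suc k)" if "k < m" for k
    using that by (simp add: mod_Suc)
  have nth_eq: "vs ! k = vs ! l \<longleftrightarrow> k = l" if "k < m" "l < m" for k l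
    using assms(1) that nth_eq_iff_index_eq m_def by blast
  fix i j assume "i \<in> {..<length vs}" "j \<in> {..<length vs}"
    and "{vs ! i, vs ! (Suc i mod length vs)} = {vs ! j, vs ! (Suc j mod length vs)}"
  then show "i = j" using assms(2) unfolding m_def[symmetric]
    by (auto simp: doubleton_eq_iff nth_eq succ split: if_splits)
qed

lemma edeg_closed_walk_edges:
  assumes "distinct vs" "3 \<le> length vs"
  shows "edeg (closed_walk_edges vs) v = (if v \<in> set vs then 2 else 0)"
proof -
  define m where "m = length vs"
  define f where "f i = {vs ! i, vs ! (Suc i mod m)}" for i
  have m3: "3 \<le> m" using assms(2) m_def by simp
  have succ: "Suc i mod m = (if Suc i = m then 0 else Suc i)" if "i < m" for i
    using that by (simp add: mod_Suc)
  have nth_eq: "vs ! i = vs ! j \<longleftrightarrow> i = j" if "i < m" "j < m" for i j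
    using assms(1) that nth_eq_iff_index_eq m_def by blast
  have walk: "closed_walk_edges vs = f ` {..<m}"
    unfolding closed_walk_edges_def f_def m_def by auto
  have "inj_on f {..<m}"
    using inj_on_closed_walk_edge[OF assms] unfolding f_def m_def by simp
  moreover have "{e \<in> f ` {..<m}. v \<in> e} = f ` {i \<in> {..<m}. v \<in> f i}" by auto
  ultimately have "edeg (closed_walk_edges vs) v = card {i \<in> {..<m}. v \<in> f i}"
    unfolding edeg_def walk by (metis (no_types, lifting) card_image inj_on_subset mem_Collect_eq subsetI)
  also have "\<dots> = (if v \<in> set vs then 2 else 0)"
  proof (cases "v \<in> set vs")
    case True
    then obtain p where p: "p < m" "v = vs ! p" by (auto simp: in_set_conv_nth m_def)
    define q where "q = (if p = 0 then m - 1 else p - 1)"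
    have pred: "Suc i mod m = p \<longleftrightarrow> i = q" if "i < m" for i
      unfolding succ[OF that] q_def using that p(1) by auto
    have "v \<in> f i \<longleftrightarrow> i = p \<or> Suc i mod m = p" if "i < m" for i
      using that p m3 unfolding f_def by (auto simp: nth_eq)
    then have "{i \<in> {..<m}. v \<in> f i} = {p, q}"
      using p(1) m3 pred unfolding q_def by auto
    moreover have "p \<noteq> q" using m3 unfolding q_def by auto
    ultimately show ?thesis using True by simp
  next
    case False
    have "vs ! (Suc i mod m) \<in> set vs" for i
      using m3 unfolding m_def by (intro nth_mem mod_less_divisor) linarith
    then have "{i \<in> {..<m}. v \<in> f i} = {}" using False unfolding f_def m_def by auto
    then show ?thesis using False by simp
  qed
  finally show ?thesis .
qed

lemma closed_walk_edges_in_cycle_space: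
  assumes "distinct vs" "3 \<le> length vs" "closed_walk_edges vs \<subseteq> E"
  shows "closed_walk_edges vs \<in> cycle_space V E"
  using assms by (simp add: cycle_space_def edeg_closed_walk_edges)

lemma is_cycle_closed_walk_edges:
  assumes "distinct vs" "3 \<le> length vs" "set vs \<subseteq> V" "closed_walk_edges vs \<subseteq> E"
  shows "is_cycle V E (closed_walk_edges vs)"
  using assms unfolding is_cycle_def closed_walk_edges_def by blast

lemma closed_walk_edges_hexagon:
  "closed_walk_edges [a, b, c, d, e, f] = {{a, b}, {b, c}, {c, d}, {d, e}, {e, f}, {f, a}}"
proof -
  let ?vs = "[a, b, c, d, e, f]"
  have "length ?vs = 6" by simp
  then have "closed_walk_edges ?vs = (\<lambda>i. {?vs ! i, ?vs ! ((i + 1) mod 6)}) ` {..<6}"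
    unfolding closed_walk_edges_def by (simp only: Setcompr_eq_image[symmetric]) blast
  also have "{..<6::nat} = {0, 1, 2, 3, 4, 5}" by auto
  finally show ?thesis by simp
qed

lemma num_components_eq_1:
  assumes "v0 \<in> V" and "\<And>e. e \<in> E \<Longrightarrow> e \<subseteq> V"
    and "\<And>v. v \<in> V \<Longrightarrow> (v0, v) \<in> (graph_adj E)\<^sup>*"
  shows "num_components V E = 1"
proof -
  let ?R = "(graph_adj E)\<^sup>*"
  have "sym (graph_adj E)" unfolding graph_adj_def sym_def by (simp add: insert_commute)
  then have equiv_R: "equiv UNIV ?R"
    by (simp add: equiv_def refl_rtrancl sym_rtrancl trans_rtrancl)
  have "?R `` {v0} \<subseteq> V"
  proof
    fix v assume "v \<in> ?R `` {v0}"
    then have "(v0, v) \<in> ?R" by simp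
    then show "v \<in> V"
    proof (induction rule: rtrancl_induct)
      case (step u w)
      then show ?case using assms(2)[of "{u, w}"] unfolding graph_adj_def by simp
    qed (use assms(1) in simp)
  qed
  then have v0_class: "?R `` {v0} = V" using assms(3) by blast
  have "?R `` {v} = V" if "v \<in> V" for v
    using equiv_class_eq[OF equiv_R assms(3)[OF that]] v0_class by simp
  then have "V // ?R = {V}" unfolding quotient_def using assms(1) by blast
  then show ?thesis unfolding num_components_def by simp
qed

locale line_arrangement =
  fixes n :: nat and Pts :: "nat set set"
  assumes arrangement: "comb_line_arr n Pts"
begin

abbreviation V :: "vert set" where "V \<equiv> inc_vertices n Pts"
abbreviation E :: "vert set set" where "E \<equiv> inc_edges n Pts"

lemma point_subset: "P \<in> Pts \<Longrightarrow> P \<subseteq> {0..n}"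
  using arrangement unfolding comb_line_arr_def by blast

lemma point_le: "P \<in> Pts \<Longrightarrow> i \<in> P \<Longrightarrow> i \<le> n"
  using point_subset by fastforce

lemma two_le_card_point: "P \<in> Pts \<Longrightarrow> 2 \<le> card P"
  using arrangement unfolding comb_line_arr_def by blast

lemma finite_point: "P \<in> Pts \<Longrightarrow> finite P"
  using two_le_card_point card.infinite by fastforce

lemma Min_point: "P \<in> Pts \<Longrightarrow> Min P \<in> P"
  using two_le_card_point finite_point by (intro Min_in) fastforce+

lemma finite_Pts: "finite Pts"
  using point_subset by (intro finite_subset[of Pts "Pow {0..n}"]) auto

lemma point_eq:
  assumes "P \<in> Pts" "Q \<in> Pts" "i \<in> P" "j \<in> P" "i \<in> Q" "j \<in> Q" "i \<noteq> j"
  shows "P = Q"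
  using arrangement assms point_le[OF assms(1)] unfolding comb_line_arr_def by metis

definition meet :: "nat \<Rightarrow> nat \<Rightarrow> nat set" where
  "meet i j = (THE P. P \<in> Pts \<and> i \<in> P \<and> j \<in> P)"

lemma meet:
  assumes "i \<le> n" "j \<le> n" "i \<noteq> j"
  shows "meet i j \<in> Pts" "i \<in> meet i j" "j \<in> meet i j"
proof -
  have "\<exists>!P. P \<in> Pts \<and> i \<in> P \<and> j \<in> P"
    using arrangement assms unfolding comb_line_arr_def by blast
  from theI'[OF this] show "meet i j \<in> Pts" "i \<in> meet i j" "j \<in> meet i j"
    unfolding meet_def by blast+
qed

lemma meet_eq: "P \<in> Pts \<Longrightarrow> i \<in> P \<Longrightarrow> j \<in> P \<Longrightarrow> i \<noteq> j \<Longrightarrow> meet i j = P"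
  using meet point_eq point_le by metis

lemma mem_nbc_iff: "(j, k) \<in> nbc n Pts \<longleftrightarrow> (\<exists>P\<in>Pts. 0 \<notin> P \<and> j = Min P \<and> k \<in> P \<and> k \<noteq> j)"
proof
  assume "(j, k) \<in> nbc n Pts"
  then obtain P where P: "P \<in> Pts" "j \<in> P" "k \<in> P" "j = Min P" and "1 \<le> j" "j < k"
    unfolding nbc_def by blast
  have "0 \<notin> P" using Min_le[OF finite_point[OF P(1)], of 0] P(4) \<open>1 \<le> j\<close> by auto
  then show "\<exists>P\<in>Pts. 0 \<notin> P \<and> j = Min P \<and> k \<in> P \<and> k \<noteq> j" using P \<open>j < k\<close> by auto
next
  assume "\<exists>P\<in>Pts. 0 \<notin> P \<and> j = Min P \<and> k \<in> P \<and> k \<noteq> j"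
  then obtain P where P: "P \<in> Pts" "0 \<notin> P" "j = Min P" "k \<in> P" "k \<noteq> j" by blast
  have "j \<in> P" using Min_point[OF P(1)] P(3) by simp
  moreover have "j < k" using Min_le[OF finite_point[OF P(1)] P(4)] P(3,5) by simp
  moreover have "1 \<le> j" using \<open>j \<in> P\<close> P(2) by (cases j) auto
  ultimately show "(j, k) \<in> nbc n Pts"
    unfolding nbc_def using P point_le by auto
qed

lemma nbc_memD:
  assumes "(j, k) \<in> nbc n Pts"
  shows "1 \<le> j" "j < k" "k \<le> n" "meet j k \<in> Pts" "0 \<notin> meet j k" "Min (meet j k) = j"
    "j \<in> meet j k" "k \<in> meet j k"
proof -
  show "1 \<le> j" "j < k" "k \<le> n" using assms unfolding nbc_def by auto
  obtain P where P: "P \<in> Pts" "0 \<notin> P" "j = Min P" "k \<in> P" "k \<noteq> j"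
    using assms mem_nbc_iff by blast
  moreover have "j \<in> P" using Min_point[OF P(1)] P(3) by simp
  ultimately have "meet j k = P" using meet_eq by blast
  then show "meet j k \<in> Pts" "0 \<notin> meet j k" "Min (meet j k) = j" "j \<in> meet j k" "k \<in> meet j k"
    using P \<open>j \<in> P\<close> by auto
qed

lemma inc_edges_eq: "E = (\<lambda>(P, i). {Inl i, Inr P}) ` (SIGMA P:Pts. P)"
  unfolding inc_edges_def using point_le by fastforce

lemma mem_inc_edges_iff: "e \<in> E \<longleftrightarrow> (\<exists>P\<in>Pts. \<exists>i\<in>P. e = {Inl i, Inr P})"
  unfolding inc_edges_eq by auto

lemma Inl_in_inc_vertices: "i \<le> n \<Longrightarrow> Inl i \<in> V"
  unfolding inc_vertices_def by simp

lemma Inr_in_inc_vertices: "P \<in> Pts \<Longrightarrow> Inr P \<in> V"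
  unfolding inc_vertices_def by simp

lemma inc_edgeI:
  assumes "P \<in> Pts" "i \<in> P"
  shows "{Inl i, Inr P} \<in> E" "{Inr P, Inl i} \<in> E"
  using assms unfolding mem_inc_edges_iff by (auto simp: insert_commute)

lemma inc_edge_subset_vertices: "e \<in> E \<Longrightarrow> e \<subseteq> V"
  unfolding mem_inc_edges_iff inc_vertices_def using point_le by fastforce

lemma finite_inc_edges: "finite E"
  unfolding inc_edges_eq using finite_Pts finite_point by simp

lemma card_inc_edges: "card E = (\<Sum>P\<in>Pts. card P)"
proof -
  have "inj_on (\<lambda>(P, i). {Inl i, Inr P} :: vert set) (SIGMA P:Pts. P)"
    by (rule inj_onI) (auto simp: doubleton_eq_iff)
  then have "card E = card (SIGMA P:Pts. P)" unfolding inc_edges_eq by (rule card_image)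
  also have "\<dots> = (\<Sum>P\<in>Pts. card P)" using finite_Pts finite_point by (simp add: card_SigmaI)
  finally show ?thesis .
qed

lemma card_inc_vertices: "card V = n + 1 + card Pts"
proof -
  have "card V = card (Inl ` {0..n} :: vert set) + card (Inr ` Pts :: vert set)"
    unfolding inc_vertices_def by (rule card_Un_disjoint) (use finite_Pts in auto)
  then show ?thesis by (simp add: card_image)
qed

lemma inc_adj:
  assumes "P \<in> Pts" "i \<in> P"
  shows "(Inl i, Inr P) \<in> graph_adj E" "(Inr P, Inl i) \<in> graph_adj E"
  using inc_edgeI[OF assms] unfolding graph_adj_def by simp_all

lemma num_components_inc_graph: "num_components V E = 1"
proof (rule num_components_eq_1)
  show "Inl 0 \<in> V" unfolding inc_vertices_def by simp
  show "e \<subseteq> V" if "e \<in> E" for e using inc_edge_subset_vertices that .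
  have line: "(Inl 0, Inl i) \<in> (graph_adj E)\<^sup>*" if "i \<le> n" for i
  proof (cases "i = 0")
    case False
    then have "meet 0 i \<in> Pts" "0 \<in> meet 0 i" "i \<in> meet 0 i" using meet[of 0 i] that by auto
    then show ?thesis by (meson inc_adj converse_rtrancl_into_rtrancl r_into_rtrancl)
  qed simp
  fix v assume "v \<in> V"
  then consider i where "i \<le> n" "v = Inl i" | P where "P \<in> Pts" "v = Inr P"
    unfolding inc_vertices_def by auto
  then show "(Inl 0, v) \<in> (graph_adj E)\<^sup>*"
  proof cases
    case (2 P)
    with Min_point point_le inc_adj line show ?thesis by (meson rtrancl.rtrancl_into_rtrancl)
  qed (use line in simp)
qed

lemma finite_nbc: "finite (nbc n Pts)"
  by (rule finite_subset[of _ "{0..n} \<times> {0..n}"]) (auto simp: nbc_def)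

fun nbc_walk :: "nat \<times> nat \<Rightarrow> vert list" where
  "nbc_walk (j, k) = [Inl 0, Inr (meet 0 j), Inl j, Inr (meet j k), Inl k, Inr (meet 0 k)]"

definition nbc_cycle :: "nat \<times> nat \<Rightarrow> vert set set" where
  "nbc_cycle p = closed_walk_edges (nbc_walk p)"

fun nbc_key_edge :: "nat \<times> nat \<Rightarrow> vert set" where
  "nbc_key_edge (j, k) = {Inl k, Inr (meet j k)}"

lemma nbc_cycle_eq:
  "nbc_cycle (j, k) = {{Inl 0, Inr (meet 0 j)}, {Inr (meet 0 j), Inl j}, {Inl j, Inr (meet j k)},
     {Inr (meet j k), Inl k}, {Inl k, Inr (meet 0 k)}, {Inr (meet 0 k), Inl 0}}"
  unfolding nbc_cycle_def by (simp add: closed_walk_edges_hexagon)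

lemma nbc_meet_0:
  assumes "(j, k) \<in> nbc n Pts"
  shows "meet 0 j \<in> Pts" "0 \<in> meet 0 j" "j \<in> meet 0 j"
    "meet 0 k \<in> Pts" "0 \<in> meet 0 k" "k \<in> meet 0 k"
  using meet[of 0 j] meet[of 0 k] nbc_memD[OF assms] by auto

lemma distinct_nbc_walk:
  assumes "(j, k) \<in> nbc n Pts"
  shows "distinct (nbc_walk (j, k))"
proof -
  note jk = nbc_memD[OF assms] and through_0 = nbc_meet_0[OF assms]
  have "meet 0 j \<noteq> meet 0 k"
    using point_eq[of "meet 0 j" "meet j k" j k] jk through_0 by auto
  then show ?thesis using jk through_0 by auto
qed

lemma nbc_walk_subset_vertices:
  assumes "(j, k) \<in> nbc n Pts"
  shows "set (nbc_walk (j, k)) \<subseteq> V"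
  using nbc_memD[OF assms] nbc_meet_0[OF assms] unfolding inc_vertices_def by auto

lemma nbc_cycle_subset_inc_edges:
  assumes "(j, k) \<in> nbc n Pts"
  shows "nbc_cycle (j, k) \<subseteq> E"
  using nbc_memD[OF assms] nbc_meet_0[OF assms] unfolding nbc_cycle_eq by (simp add: inc_edgeI)

lemma is_cycle_nbc_cycle:
  assumes "p \<in> nbc n Pts"
  shows "is_cycle V E (nbc_cycle p)"
proof (cases p)
  case (Pair j k)
  with assms have "(j, k) \<in> nbc n Pts" by simp
  then show ?thesis
    using is_cycle_closed_walk_edges[OF distinct_nbc_walk _ nbc_walk_subset_vertices]
      nbc_cycle_subset_inc_edges
    unfolding Pair nbc_cycle_def by simp
qed

lemma nbc_cycle_in_cycle_space:
  assumes "p \<in> nbc n Pts"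
  shows "nbc_cycle p \<in> cycle_space V E"
proof (cases p)
  case (Pair j k)
  with assms have "(j, k) \<in> nbc n Pts" by simp
  then show ?thesis
    using closed_walk_edges_in_cycle_space[OF distinct_nbc_walk] nbc_cycle_subset_inc_edges
    unfolding Pair nbc_cycle_def by simp
qed

lemma private_edges_nbc_cycle: "private_edges (nbc n Pts) nbc_cycle nbc_key_edge"
  unfolding private_edges_def
proof (intro ballI conjI impI)
  fix p assume "p \<in> nbc n Pts"
  obtain j k where p: "p = (j, k)" by fastforce
  show "nbc_key_edge p \<in> nbc_cycle p" unfolding p nbc_cycle_eq by (simp add: insert_commute)
  fix p' assume "p' \<in> nbc n Pts" and key: "nbc_key_edge p \<in> nbc_cycle p'"
  obtain j' k' where p': "p' = (j', k')" by fastforce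
  note jk = nbc_memD[OF \<open>p \<in> nbc n Pts\<close>[unfolded p]]
    and jk' = nbc_memD[OF \<open>p' \<in> nbc n Pts\<close>[unfolded p']]
    and through_0' = nbc_meet_0[OF \<open>p' \<in> nbc n Pts\<close>[unfolded p']]
  have "meet j k = meet j' k'" "k = j' \<or> k = k'"
    using key jk(5) through_0' unfolding p p' nbc_cycle_eq by (auto simp: doubleton_eq_iff)
  moreover from this have "j = j'" using jk(6) jk'(6) by simp
  ultimately show "p' = p" using jk(2) unfolding p p' by auto
qed

lemma non_key_edge_shape:
  assumes "e \<in> E" and no_key: "\<forall>p\<in>nbc n Pts. nbc_key_edge p \<noteq> e"
  shows "\<exists>P\<in>Pts. \<exists>i\<in>P. e = {Inl i, Inr P} \<and> (0 \<notin> P \<longrightarrow> i = Min P)"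
proof -
  obtain P i where P: "P \<in> Pts" "i \<in> P" "e = {Inl i, Inr P}"
    using \<open>e \<in> E\<close> unfolding mem_inc_edges_iff by blast
  have "i = Min P" if "0 \<notin> P"
  proof (rule ccontr)
    assume "i \<noteq> Min P"
    then have "(Min P, i) \<in> nbc n Pts" unfolding mem_nbc_iff using P(1,2) that by blast
    moreover have "meet (Min P) i = P"
      using meet_eq[OF P(1) Min_point[OF P(1)] P(2)] \<open>i \<noteq> Min P\<close> by simp
    then have "nbc_key_edge (Min P, i) = e" using P(3) by simp
    ultimately show False using no_key by blast
  qed
  then show ?thesis using P by blast
qed

(* Peel off leaves of the spanning tree of non-key edges: first the points missing line 0,
   then the lines other than line 0, finally the points through line 0. *)
lemma cycle_space_without_key_edges_empty:
  assumes F: "F \<in> cycle_space V E" and no_key: "\<forall>p\<in>nbc n Pts. nbc_key_edge p \<notin> F"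
  shows "F = {}"
proof -
  have "F \<subseteq> E" and even: "\<And>v. v \<in> V \<Longrightarrow> even (edeg F v)"
    using F unfolding cycle_space_def by auto
  have isolated: "v \<notin> \<Union>F"
    if "v \<in> V" and only_e0: "\<And>e. e \<in> F \<Longrightarrow> v \<in> e \<Longrightarrow> e = e0" for v e0
    using even[OF \<open>v \<in> V\<close>] only_e0 by (rule no_pendant_edge)
  have shape: "\<exists>P\<in>Pts. \<exists>i\<in>P. e = {Inl i, Inr P} \<and> (0 \<notin> P \<longrightarrow> i = Min P)" if "e \<in> F" for e
  proof (rule non_key_edge_shape)
    show "e \<in> E" using that \<open>F \<subseteq> E\<close> by blast
    show "\<forall>p\<in>nbc n Pts. nbc_key_edge p \<noteq> e" using no_key that by blast
  qed
  have through_0: "0 \<in> P" if "e \<in> F" "Inr P \<in> e" for e P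
  proof (rule ccontr)
    assume "0 \<notin> P"
    have "P \<in> Pts" using shape[OF \<open>e \<in> F\<close>] \<open>Inr P \<in> e\<close> by auto
    have "e' = {Inl (Min P), Inr P}" if "e' \<in> F" "Inr P \<in> e'" for e'
      using shape[OF that(1)] that(2) \<open>0 \<notin> P\<close> by auto
    then have "Inr P \<notin> \<Union>F" by (rule isolated[OF Inr_in_inc_vertices[OF \<open>P \<in> Pts\<close>]])
    then show False using that by blast
  qed
  have on_line_0: "i = 0" if "e \<in> F" "Inl i \<in> e" for e i
  proof (rule ccontr)
    assume "i \<noteq> 0"
    have "i \<le> n" using shape[OF \<open>e \<in> F\<close>] \<open>Inl i \<in> e\<close> point_le by auto
    have "e' = {Inl i, Inr (meet 0 i)}" if e': "e' \<in> F" "Inl i \<in> e'" for e'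
    proof -
      obtain P where P: "P \<in> Pts" "i \<in> P" "e' = {Inl i, Inr P}"
        using shape[OF e'(1)] e'(2) by auto
      then have "0 \<in> P" using through_0[OF e'(1)] by simp
      then show ?thesis using meet_eq[OF P(1) \<open>0 \<in> P\<close> P(2)] \<open>i \<noteq> 0\<close> P(3) by simp
    qed
    then have "Inl i \<notin> \<Union>F" by (rule isolated[OF Inl_in_inc_vertices[OF \<open>i \<le> n\<close>]])
    then show False using that by blast
  qed
  show "F = {}"
  proof (rule ccontr)
    assume "F \<noteq> {}"
    then obtain e where "e \<in> F" by blast
    then obtain P i where "P \<in> Pts" "e = {Inl i, Inr P}" using shape by blast
    have "e' = {Inl 0, Inr P}" if e': "e' \<in> F" "Inr P \<in> e'" for e'
    proof -
      obtain i' where "e' = {Inl i', Inr P}" using shape[OF e'(1)] e'(2) by auto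
      then show ?thesis using on_line_0[OF e'(1), of i'] by simp
    qed
    then have "Inr P \<notin> \<Union>F" by (rule isolated[OF Inr_in_inc_vertices[OF \<open>P \<in> Pts\<close>]])
    then show False using \<open>e \<in> F\<close> \<open>e = {Inl i, Inr P}\<close> by blast
  qed
qed

lemma is_cycle_basis_nbc_cycles: "is_cycle_basis V E (nbc_cycle ` nbc n Pts)"
  unfolding is_cycle_basis_def
proof (intro conjI)
  show "\<forall>C\<in>nbc_cycle ` nbc n Pts. is_cycle V E C" using is_cycle_nbc_cycle by blast
  show "gf2_independent (nbc_cycle ` nbc n Pts)"
    using private_edges_nbc_cycle by (rule gf2_independent_if_private_edges)
  show "gf2_spans (nbc_cycle ` nbc n Pts) (cycle_space V E)"
    using private_edges_nbc_cycle finite_nbc finite_inc_edges nbc_cycle_in_cycle_space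
      cycle_space_without_key_edges_empty
    by (rule gf2_spans_cycle_space_if_private_edges)
qed

lemma card_nbc: "card (nbc n Pts) = (\<Sum>P\<in>{P \<in> Pts. 0 \<notin> P}. card P - 1)"
proof -
  let ?A = "{P \<in> Pts. 0 \<notin> P}"
  let ?S = "SIGMA P:?A. P - {Min P}"
  let ?f = "\<lambda>(P, k). (Min P, k)"
  have "(j, k) \<in> nbc n Pts \<longleftrightarrow> (j, k) \<in> ?f ` ?S" for j k
    unfolding mem_nbc_iff by force
  then have nbc_eq: "nbc n Pts = ?f ` ?S" by (simp add: set_eq_iff split_paired_All)
  have "inj_on ?f ?S"
  proof (rule inj_onI)
    fix x y assume "x \<in> ?S" "y \<in> ?S" "?f x = ?f y"
    then obtain P Q k where "x = (P, k)" "y = (Q, k)" "P \<in> Pts" "Q \<in> Pts" "Min P = Min Q"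
      "k \<in> P" "k \<in> Q" "k \<noteq> Min P" by auto
    with Min_point point_eq show "x = y" by metis
  qed
  then have "card (nbc n Pts) = card ?S" unfolding nbc_eq by (rule card_image)
  also have "\<dots> = (\<Sum>P\<in>?A. card (P - {Min P}))"
    using finite_Pts finite_point by (simp add: card_SigmaI)
  also have "\<dots> = (\<Sum>P\<in>?A. card P - 1)"
    using finite_point Min_point by (intro sum.cong) auto
  finally show ?thesis .
qed

lemma sum_card_points_through_0: "(\<Sum>P\<in>{P \<in> Pts. 0 \<in> P}. card P - 1) = n"
proof -
  let ?A = "{P \<in> Pts. 0 \<in> P}"
  have "(\<Union>P\<in>?A. P - {0}) = {1..n}"
  proof (intro equalityI subsetI)
    fix i assume "i \<in> (\<Union>P\<in>?A. P - {0})"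
    then show "i \<in> {1..n}" using point_le by fastforce
  next
    fix i assume "i \<in> {1..n}"
    then have "meet 0 i \<in> ?A" "i \<in> meet 0 i - {0}" using meet[of 0 i] by auto
    then show "i \<in> (\<Union>P\<in>?A. P - {0})" by blast
  qed
  moreover have "card (\<Union>P\<in>?A. P - {0}) = (\<Sum>P\<in>?A. card (P - {0}))"
  proof (rule card_UN_disjoint)
    show "finite ?A" using finite_Pts by simp
    show "\<forall>P\<in>?A. finite (P - {0})" using finite_point by simp
    show "\<forall>P\<in>?A. \<forall>Q\<in>?A. P \<noteq> Q \<longrightarrow> (P - {0}) \<inter> (Q - {0}) = {}"
      using point_eq by blast
  qed
  moreover have "(\<Sum>P\<in>?A. card (P - {0})) = (\<Sum>P\<in>?A. card P - 1)"
    using finite_point by (intro sum.cong) auto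
  ultimately show ?thesis by simp
qed

lemma betti1_eq_card_nbc: "betti1 V E = int (card (nbc n Pts))"
proof -
  have "(\<Sum>P\<in>Pts. card P) = (\<Sum>P\<in>Pts. (card P - 1) + 1)"
  proof (rule sum.cong)
    show "card P = card P - 1 + 1" if "P \<in> Pts" for P using two_le_card_point[OF that] by simp
  qed simp
  also have "\<dots> = (\<Sum>P\<in>Pts. card P - 1) + card Pts" by (simp add: sum_Suc)
  also have "(\<Sum>P\<in>Pts. card P - 1)
      = (\<Sum>P\<in>{P \<in> Pts. 0 \<in> P}. card P - 1) + (\<Sum>P\<in>{P \<in> Pts. 0 \<notin> P}. card P - 1)"
    using sum.Int_Diff[OF finite_Pts, of _ "{P. 0 \<in> P}"] by (simp add: Int_def set_diff_eq)
  finally have "card E = n + card (nbc n Pts) + card Pts"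
    unfolding card_inc_edges sum_card_points_through_0 card_nbc .
  then show ?thesis
    unfolding betti1_def num_components_inc_graph card_inc_vertices by simp
qed

end

theorem mainTheorem2:
  fixes n :: nat and Pts :: "nat set set"
  assumes "comb_line_arr n Pts"
  shows "(\<exists>f. bij_betw f (nbc n Pts) (f ` nbc n Pts) \<and>
            is_cycle_basis (inc_vertices n Pts) (inc_edges n Pts) (f ` nbc n Pts))
         \<and> betti1 (inc_vertices n Pts) (inc_edges n Pts) = int (card (nbc n Pts))"
proof -
  interpret line_arrangement n Pts using assms by unfold_locales
  have "bij_betw nbc_cycle (nbc n Pts) (nbc_cycle ` nbc n Pts)"
    using private_edges_inj_on[OF private_edges_nbc_cycle] by (simp add: bij_betw_def)
  then show ?thesis using is_cycle_basis_nbc_cycles betti1_eq_card_nbc by blast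
qed

end
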